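(* Let $D_{C_3}$ be a weighted oriented graph whose underlying graph is the $3$-cycle $C_3$. Then $I(D_{C_3})$ is Cohen-Macaulay if and only if there exists a vertex $x$ of $D_{C_3}$ with $w(x)=1$.
   Context: A weighted oriented graph $D$ with underlying simple graph on vertices $x_1,\ldots,x_n$ is an orientation of its edges with a weight function $w:V\to\mathbb{Z}_{>0}$; an edge oriented from $x_i$ to $x_j$ is written $(x_i,x_j)$. By convention, a source (a vertex all of whose edges are oriented away from it) is assigned weight $1$. The edge ideal is $I(D)=\langle x_ix_j^{w(x_j)}:(x_i,x_j)\in E(D)\rangle\subseteq A=K[x_1,\ldots,x_n]$, $K$ a field; $I(D)$ is Cohen-Macaulay if $A/I(D)$ is Cohen-Macaulay. *)

theory Defs
  imports Main "HOL-Library.Cardinality" "HOL-Library.Poly_Mapping" "HOL-Library.Extended_Nat"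
begin

definition is_ideal :: "'a::comm_ring_1 set \<Rightarrow> bool" where
  "is_ideal J \<longleftrightarrow> 0 \<in> J \<and> (\<forall>a\<in>J. \<forall>b\<in>J. a + b \<in> J) \<and> (\<forall>a\<in>J. \<forall>r. r * a \<in> J)"

definition ideal_gen :: "'a::comm_ring_1 set \<Rightarrow> 'a set" where
  "ideal_gen S = \<Inter>{J. is_ideal J \<and> S \<subseteq> J}"

definition prime_ideal :: "'a::comm_ring_1 set \<Rightarrow> bool" where
  "prime_ideal P \<longleftrightarrow> is_ideal P \<and> P \<noteq> UNIV \<and> (\<forall>a b. a * b \<in> P \<longrightarrow> a \<in> P \<or> b \<in> P)"

definition maximal_ideal :: "'a::comm_ring_1 set \<Rightarrow> bool" where
  "maximal_ideal M \<longleftrightarrow> is_ideal M \<and> M \<noteq> UNIV \<and>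
     (\<forall>J. is_ideal J \<and> M \<subseteq> J \<longrightarrow> J = M \<or> J = UNIV)"

section \<open>Notions for the quotient ring R = A/I, expressed via ideals of A containing I\<close>

definition quot_height :: "'a::comm_ring_1 set \<Rightarrow> 'a set \<Rightarrow> enat" where
  "quot_height I P = Sup {enat n | n. \<exists>C :: nat \<Rightarrow> 'a set.
       (\<forall>i\<le>n. prime_ideal (C i) \<and> I \<subseteq> C i) \<and> (\<forall>i<n. C i \<subset> C (Suc i)) \<and> C n = P}"

definition quot_regular_seq :: "'a::comm_ring_1 set \<Rightarrow> 'a list \<Rightarrow> bool" where
  "quot_regular_seq I fs \<longleftrightarrow>
     (\<forall>k < length fs. \<forall>g. g * fs ! k \<in> ideal_gen (I \<union> set (take k fs))
                         \<longrightarrow> g \<in> ideal_gen (I \<union> set (take k fs)))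
     \<and> ideal_gen (I \<union> set fs) \<noteq> UNIV"

text \<open>Grade of the ideal J/I on A/I (= depth of the localisation of A/I at J/I when
  J is maximal): supremum of lengths of (A/I)-regular sequences inside J/I.\<close>
definition quot_grade :: "'a::comm_ring_1 set \<Rightarrow> 'a set \<Rightarrow> enat" where
  "quot_grade I J = Sup {enat (length fs) | fs. set fs \<subseteq> J \<and> quot_regular_seq I fs}"

text \<open>A/I is Cohen-Macaulay: for every maximal ideal m of A/I, depth (A/I)_m = dim (A/I)_m.\<close>
definition cohen_macaulay_quot :: "'a::comm_ring_1 set \<Rightarrow> bool" where
  "cohen_macaulay_quot I \<longleftrightarrow>
     (\<forall>M. maximal_ideal M \<and> I \<subseteq> M \<longrightarrow> quot_grade I M = quot_height I M)"

type_synonym ('v, 'k) mpoly = "('v \<Rightarrow>\<^sub>0 nat) \<Rightarrow>\<^sub>0 'k"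

definition Var :: "'v \<Rightarrow> ('v, 'k::comm_ring_1) mpoly" where
  "Var v = Poly_Mapping.single (Poly_Mapping.single v 1) 1"

definition edge_ideal :: "('v \<times> 'v) set \<Rightarrow> ('v \<Rightarrow> nat) \<Rightarrow> ('v, 'k::comm_ring_1) mpoly set" where
  "edge_ideal E w = ideal_gen {Var i * Var j ^ w j | i j. (i, j) \<in> E}"

definition is_orientation :: "('v \<Rightarrow> 'v \<Rightarrow> bool) \<Rightarrow> ('v \<times> 'v) set \<Rightarrow> bool" where
  "is_orientation G E \<longleftrightarrow> (\<forall>x y. (x, y) \<in> E \<longrightarrow> G x y) \<and>
     (\<forall>x y. G x y \<longrightarrow> ((x, y) \<in> E \<longleftrightarrow> (y, x) \<notin> E))"

definition is_source :: "('v \<Rightarrow> 'v \<Rightarrow> bool) \<Rightarrow> ('v \<times> 'v) set \<Rightarrow> 'v \<Rightarrow> bool" where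
  "is_source G E x \<longleftrightarrow> (\<forall>y. G x y \<longrightarrow> (x, y) \<in> E)"

text \<open>The 3-cycle C_3 on a 3-element vertex type: every two distinct vertices are adjacent.\<close>
definition C3_graph :: "'v \<Rightarrow> 'v \<Rightarrow> bool" where
  "C3_graph x y \<longleftrightarrow> x \<noteq> y"

end

(* Every prime ideal over I(D) contains all variables but one, say all but x_c, and modulo them the
   ring becomes K[x_c], in which nonzero primes are maximal. Hence every maximal ideal M over I(D)
   has height one, realised by the chain (x_a, x_b) < M; and grade never exceeds height.

   If some vertex has weight one, I(D) is the intersection of its three saturations I(D) : x_v^oo.
   Taking p(x_c) in M but not in (x_a, x_b), the element x_a + x_b + p(x_c) of M is regular modulo
   each saturation, since there it is a nonzero polynomial in x_v plus a nilpotent; so it is regular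
   modulo I(D) and every M has grade one.

   If no vertex has weight one then there is no source either, and every variable multiplies the
   monomial prod_v x_v^(w(v) - 1), which lies outside I(D), into I(D). So the maximal ideal
   (x_a, x_b, x_c) consists of zero divisors and has grade zero. *)

theory Submission
  imports Defs "HOL-Computational_Algebra.Polynomial"
begin

section \<open>Ideals of commutative rings\<close>

lemma ideal_zero: "is_ideal J \<Longrightarrow> 0 \<in> J"
  and ideal_add: "is_ideal J \<Longrightarrow> a \<in> J \<Longrightarrow> b \<in> J \<Longrightarrow> a + b \<in> J"
  and ideal_mult_left: "is_ideal J \<Longrightarrow> a \<in> J \<Longrightarrow> r * a \<in> J"
  and ideal_mult_right: "is_ideal J \<Longrightarrow> a \<in> J \<Longrightarrow> a * r \<in> J"
  unfolding is_ideal_def by (auto simp: mult.commute)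

lemma ideal_diff: "is_ideal J \<Longrightarrow> a \<in> J \<Longrightarrow> b \<in> J \<Longrightarrow> a - b \<in> J"
  using ideal_add[of J a "(- 1) * b"] ideal_mult_left[of J b "- 1"] by simp

lemma ideal_eq_UNIV_if_one: "is_ideal J \<Longrightarrow> 1 \<in> J \<Longrightarrow> J = UNIV"
  using ideal_mult_right[of J 1] by auto

lemma ideal_sum: "is_ideal J \<Longrightarrow> (\<And>x. x \<in> A \<Longrightarrow> f x \<in> J) \<Longrightarrow> sum f A \<in> J"
  by (induction A rule: infinite_finite_induct) (auto intro: ideal_zero ideal_add)

lemma ideal_power: "is_ideal J \<Longrightarrow> a \<in> J \<Longrightarrow> 0 < n \<Longrightarrow> a ^ n \<in> J"
  by (cases n) (simp_all add: ideal_mult_right)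

lemma ideal_gen_is_ideal: "is_ideal (ideal_gen S)"
  unfolding is_ideal_def ideal_gen_def by auto

lemma ideal_gen_superset: "S \<subseteq> ideal_gen S"
  unfolding ideal_gen_def by auto

lemma ideal_gen_least: "is_ideal J \<Longrightarrow> S \<subseteq> J \<Longrightarrow> ideal_gen S \<subseteq> J"
  unfolding ideal_gen_def by auto

lemma ideal_gen_ideal: "is_ideal J \<Longrightarrow> ideal_gen J = J"
  using ideal_gen_least ideal_gen_superset by blast

lemma ideal_gen_mono: "S \<subseteq> T \<Longrightarrow> ideal_gen S \<subseteq> ideal_gen T"
  by (meson ideal_gen_is_ideal ideal_gen_least ideal_gen_superset order_trans)

lemma mem_ideal_gen_insert:
  assumes "is_ideal J"
  shows "x \<in> ideal_gen (insert a J) \<longleftrightarrow> (\<exists>m\<in>J. \<exists>r. x = m + r * a)"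
proof
  let ?K = "{m + r * a | m r. m \<in> J}"
  have "is_ideal ?K"
    unfolding is_ideal_def
  proof (intro conjI ballI allI)
    have "0 = 0 + 0 * a" by simp
    then show "0 \<in> ?K" using ideal_zero[OF assms] by blast
    fix y z assume "y \<in> ?K" "z \<in> ?K"
    then obtain m r m' r' where "y = m + r * a" "z = m' + r' * a" "m \<in> J" "m' \<in> J" by blast
    then have "y + z = (m + m') + (r + r') * a" by (simp add: algebra_simps)
    moreover have "m + m' \<in> J" using \<open>m \<in> J\<close> \<open>m' \<in> J\<close> by (rule ideal_add[OF assms])
    ultimately show "y + z \<in> ?K" by blast
  next
    fix y s assume "y \<in> ?K"
    then obtain m r where "y = m + r * a" "m \<in> J" by blast
    then have "s * y = s * m + (s * r) * a" by (simp add: algebra_simps)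
    moreover have "s * m \<in> J" using \<open>m \<in> J\<close> by (rule ideal_mult_left[OF assms])
    ultimately show "s * y \<in> ?K" by blast
  qed
  moreover have "insert a J \<subseteq> ?K"
  proof
    fix y assume "y \<in> insert a J"
    then have "y = 0 + 1 * a \<and> 0 \<in> J \<or> y = y + 0 * a \<and> y \<in> J"
      using ideal_zero[OF assms] by auto
    then show "y \<in> ?K" by blast
  qed
  ultimately show "x \<in> ideal_gen (insert a J) \<Longrightarrow> \<exists>m\<in>J. \<exists>r. x = m + r * a"
    using ideal_gen_least by blast
next
  assume "\<exists>m\<in>J. \<exists>r. x = m + r * a"
  then obtain m r where "x = m + r * a" "m \<in> J" by blast
  moreover have "m \<in> ideal_gen (insert a J)" "a \<in> ideal_gen (insert a J)"
    using \<open>m \<in> J\<close> ideal_gen_superset by blast+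
  ultimately show "x \<in> ideal_gen (insert a J)"
    using ideal_add ideal_mult_left ideal_gen_is_ideal by metis
qed

lemma prime_idealD: "prime_ideal P \<Longrightarrow> a * b \<in> P \<Longrightarrow> a \<in> P \<or> b \<in> P"
  and prime_ideal_is_ideal: "prime_ideal P \<Longrightarrow> is_ideal P"
  and prime_ideal_not_UNIV: "prime_ideal P \<Longrightarrow> P \<noteq> UNIV"
  unfolding prime_ideal_def by blast+

lemma prime_ideal_one_notin: "prime_ideal P \<Longrightarrow> 1 \<notin> P"
  using ideal_eq_UNIV_if_one prime_ideal_is_ideal prime_ideal_not_UNIV by blast

lemma prime_ideal_power: "prime_ideal P \<Longrightarrow> a ^ n \<in> P \<Longrightarrow> a \<in> P"
  by (induction n) (auto dest: prime_idealD prime_ideal_one_notin)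

lemma is_ideal_Union_chain:
  assumes C: "C \<noteq> {}" "\<And>K. K \<in> C \<Longrightarrow> is_ideal K"
    and chain: "\<And>K K'. K \<in> C \<Longrightarrow> K' \<in> C \<Longrightarrow> K \<subseteq> K' \<or> K' \<subseteq> K"
  shows "is_ideal (\<Union>C)"
  unfolding is_ideal_def
proof (intro conjI ballI allI)
  show "0 \<in> \<Union>C" using C by (auto intro: ideal_zero)
next
  fix x y assume "x \<in> \<Union>C" "y \<in> \<Union>C"
  then obtain K K' where "K \<in> C" "K' \<in> C" "x \<in> K" "y \<in> K'" by auto
  with chain have "x \<in> K \<and> y \<in> K \<or> x \<in> K' \<and> y \<in> K'" by blast
  then show "x + y \<in> \<Union>C" using C(2) \<open>K \<in> C\<close> \<open>K' \<in> C\<close> by (auto intro: ideal_add)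
next
  fix x r assume "x \<in> \<Union>C"
  then show "r * x \<in> \<Union>C" using C(2) by (auto intro: ideal_mult_left)
qed

lemma prime_ideal_if_maximal_disjoint:
  fixes P S :: "'a::comm_ring_1 set"
  assumes P: "is_ideal P" "P \<inter> S = {}"
    and S1: "1 \<in> S" and Smult: "\<And>x y. x \<in> S \<Longrightarrow> y \<in> S \<Longrightarrow> x * y \<in> S"
    and max: "\<And>K. is_ideal K \<Longrightarrow> P \<subseteq> K \<Longrightarrow> K \<inter> S = {} \<Longrightarrow> K = P"
  shows "prime_ideal P"
proof -
  have meets_S: "\<exists>m\<in>P. \<exists>r. m + r * a \<in> S" if "a \<notin> P" for a
  proof -
    let ?P' = "ideal_gen (insert a P)"
    have "?P' \<noteq> P" using that ideal_gen_superset[of "insert a P"] by blast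
    then obtain x where "x \<in> ?P'" "x \<in> S"
      using max[OF ideal_gen_is_ideal] ideal_gen_superset[of "insert a P"] by blast
    then show ?thesis unfolding mem_ideal_gen_insert[OF P(1)] by blast
  qed
  have "a \<in> P \<or> b \<in> P" if ab: "a * b \<in> P" for a b
  proof (rule ccontr)
    assume "\<not> (a \<in> P \<or> b \<in> P)"
    then obtain m r m' r' where "m \<in> P" "m' \<in> P" and S: "m + r * a \<in> S" "m' + r' * b \<in> S"
      using meets_S by meson
    have "(m + r * a) * (m' + r' * b) = m * (m' + r' * b) + (r * a) * m' + (r * r') * (a * b)"
      by (simp add: algebra_simps)
    also have "\<dots> \<in> P"
      using ideal_mult_right[OF P(1) \<open>m \<in> P\<close>] ideal_mult_left[OF P(1) \<open>m' \<in> P\<close>]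
        ideal_mult_left[OF P(1) ab] by (intro ideal_add[OF P(1)])
    finally show False using Smult[OF S] P(2) by blast
  qed
  then show ?thesis using P S1 unfolding prime_ideal_def by blast
qed

lemma exists_prime_ideal_disjoint:
  fixes J S :: "'a::comm_ring_1 set"
  assumes J: "is_ideal J" and S1: "1 \<in> S" and Smult: "\<And>x y. x \<in> S \<Longrightarrow> y \<in> S \<Longrightarrow> x * y \<in> S"
    and disj: "J \<inter> S = {}"
  obtains P where "prime_ideal P" "J \<subseteq> P" "P \<inter> S = {}"
proof -
  define A where "A = {K. is_ideal K \<and> J \<subseteq> K \<and> K \<inter> S = {}}"
  have "\<forall>C \<in> chains A. \<exists>U\<in>A. \<forall>X\<in>C. X \<subseteq> U"
  proof
    fix C assume C: "C \<in> chains A"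
    show "\<exists>U\<in>A. \<forall>X\<in>C. X \<subseteq> U"
    proof (cases "C = {}")
      case True
      then show ?thesis using J disj unfolding A_def by auto
    next
      case False
      have CA: "C \<subseteq> A" using C chainsD2 by blast
      then have "is_ideal (\<Union>C)"
        using is_ideal_Union_chain[OF False] chainsD[OF C] unfolding A_def by blast
      then have "\<Union>C \<in> A" using False CA unfolding A_def by auto
      then show ?thesis by auto
    qed
  qed
  then obtain P where PA: "P \<in> A" and Pmax: "\<forall>X\<in>A. P \<subseteq> X \<longrightarrow> X = P"
    by (rule Zorn_Lemma2[THEN bexE])
  have P: "is_ideal P" "J \<subseteq> P" "P \<inter> S = {}" using PA unfolding A_def by auto
  moreover have "K = P" if "is_ideal K" "P \<subseteq> K" "K \<inter> S = {}" for K
    using Pmax that P(2) unfolding A_def by blast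
  ultimately have "prime_ideal P"
    using prime_ideal_if_maximal_disjoint[OF P(1,3) S1 Smult] by blast
  with P show thesis using that by blast
qed

lemma maximal_ideal_imp_prime:
  assumes M: "maximal_ideal M"
  shows "prime_ideal M"
proof -
  have iM: "is_ideal M" and "M \<inter> {1} = {}"
    using M ideal_eq_UNIV_if_one unfolding maximal_ideal_def by blast+
  obtain P where P: "prime_ideal P" "M \<subseteq> P"
    by (rule exists_prime_ideal_disjoint[OF iM, of "{1}"]) (use \<open>M \<inter> {1} = {}\<close> in auto)
  then have "P = M"
    using M prime_ideal_is_ideal prime_ideal_not_UNIV unfolding maximal_ideal_def by blast
  then show ?thesis using P(1) by simp
qed

definition regular_mod :: "'a::comm_ring_1 set \<Rightarrow> 'a \<Rightarrow> bool" where
  "regular_mod J x \<longleftrightarrow> (\<forall>g. g * x \<in> J \<longrightarrow> g \<in> J)"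

lemma regular_modD: "regular_mod J x \<Longrightarrow> g * x \<in> J \<Longrightarrow> g \<in> J"
  unfolding regular_mod_def by blast

lemma regular_mod_power:
  assumes "regular_mod J x"
  shows "regular_mod J (x ^ n)"
  unfolding regular_mod_def
proof (induction n)
  case (Suc n)
  then show ?case using regular_modD[OF assms] by (metis mult.assoc power_Suc2)
qed simp

text \<open>A prime over \<open>J\<close> avoiding the products \<open>s x\<^sup>n\<close> with \<open>s \<notin> Q\<close>, which miss \<open>J\<close> because \<open>x\<close> is
  regular, lies inside \<open>Q\<close> but does not contain \<open>x\<close>.\<close>

lemma exists_prime_ideal_below_regular:
  assumes J: "is_ideal J" and Q: "prime_ideal Q" "J \<subseteq> Q" and x: "x \<in> Q" "regular_mod J x"
  obtains Q0 where "prime_ideal Q0" "J \<subseteq> Q0" "Q0 \<subset> Q"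
proof -
  define S where "S = {s * x ^ n | s n. s \<notin> Q}"
  have S_intro: "s * x ^ n \<in> S" if "s \<notin> Q" for s n
    using that unfolding S_def by blast
  have "1 \<in> S" using S_intro[of 1 0] prime_ideal_one_notin[OF Q(1)] by simp
  moreover have "u * v \<in> S" if "u \<in> S" "v \<in> S" for u v
  proof -
    obtain s n s' n' where "u = s * x ^ n" "v = s' * x ^ n'" "s \<notin> Q" "s' \<notin> Q"
      using \<open>u \<in> S\<close> \<open>v \<in> S\<close> unfolding S_def by blast
    then have "u * v = (s * s') * x ^ (n + n')" "s * s' \<notin> Q"
      using prime_idealD[OF Q(1)] by (auto simp: algebra_simps power_add)
    then show ?thesis using S_intro by metis
  qed
  moreover have "J \<inter> S = {}"
    using regular_modD[OF regular_mod_power[OF x(2)]] Q(2) unfolding S_def by blast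
  ultimately obtain P where P: "prime_ideal P" "J \<subseteq> P" "P \<inter> S = {}"
    using exists_prime_ideal_disjoint[OF J] by metis
  have "P \<subseteq> Q" using P(3) S_intro[of _ 0] by auto
  moreover have "x \<notin> P" using P(3) S_intro[of 1 1] prime_ideal_one_notin[OF Q(1)] by auto
  ultimately show thesis using that P x(1) by blast
qed

text \<open>The identity \<open>u\<^sup>N - (-n)\<^sup>N = (u + n) * \<Sum>\<dots>\<close> shows that \<open>g * u\<^sup>N \<in> Q\<close> whenever
  \<open>g * (u + n) \<in> Q\<close>.\<close>

lemma regular_mod_add_nilpotent:
  assumes Q: "is_ideal Q" and u: "regular_mod Q u" and n: "n ^ N \<in> Q"
  shows "regular_mod Q (u + n)"
  unfolding regular_mod_def
proof (intro allI impI)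
  fix g assume g: "g * (u + n) \<in> Q"
  have "u ^ N - (- n) ^ N = (u - (- n)) * (\<Sum>i<N. (- n) ^ (N - Suc i) * u ^ i)"
    by (rule power_diff_sumr2)
  then have "g * u ^ N
      = (g * (u + n)) * (\<Sum>i<N. (- n) ^ (N - Suc i) * u ^ i) + ((- 1) ^ N * g) * n ^ N"
    by (simp add: algebra_simps power_minus[of n N])
  also have "\<dots> \<in> Q" by (rule ideal_add[OF Q ideal_mult_right[OF Q g] ideal_mult_left[OF Q n]])
  finally show "g \<in> Q" using regular_modD[OF regular_mod_power[OF u]] by blast
qed

lemma power_add_mem_ideal:
  assumes Q: "is_ideal Q" and x: "x ^ p \<in> Q" and y: "y ^ q \<in> Q"
  shows "(x + y) ^ (p + q) \<in> Q"
proof -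
  have "x ^ k * y ^ (p + q - k) \<in> Q" for k
  proof (cases "p \<le> k")
    case True
    then have "x ^ k = x ^ (k - p) * x ^ p" by (simp flip: power_add)
    then have "x ^ k * y ^ (p + q - k) = (x ^ (k - p) * y ^ (p + q - k)) * x ^ p"
      by (simp add: algebra_simps)
    then show ?thesis using ideal_mult_left[OF Q x] by simp
  next
    case False
    then have "y ^ (p + q - k) = y ^ (p - k) * y ^ q" by (simp flip: power_add)
    then have "x ^ k * y ^ (p + q - k) = (x ^ k * y ^ (p - k)) * y ^ q"
      by (simp add: algebra_simps)
    then show ?thesis using ideal_mult_left[OF Q y] by simp
  qed
  then have "(\<Sum>k\<le>p+q. of_nat ((p + q) choose k) * x ^ k * y ^ (p + q - k)) \<in> Q"
    by (intro ideal_sum[OF Q]) (simp add: mult.assoc ideal_mult_left[OF Q])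
  then show ?thesis by (simp add: binomial_ring)
qed

lemma ideal_gen_mult_mem:
  assumes I: "is_ideal I" and S: "\<And>s. s \<in> S \<Longrightarrow> u * s \<in> I" and f: "f \<in> ideal_gen S"
  shows "u * f \<in> I"
proof -
  have "is_ideal {f. u * f \<in> I}"
    unfolding is_ideal_def
    by (auto simp: distrib_left mult.left_commute[of u] ideal_zero[OF I] ideal_add[OF I]
        ideal_mult_left[OF I])
  then show ?thesis using ideal_gen_least[of "{f. u * f \<in> I}" S] S f by blast
qed

lemma prime_ideal_vimage:
  fixes \<phi> :: "'a::comm_ring_1 \<Rightarrow> 'b::comm_ring_1"
  assumes Q: "prime_ideal Q"
    and add: "\<And>a b. \<phi> (a + b) = \<phi> a + \<phi> b" and mult: "\<And>a b. \<phi> (a * b) = \<phi> a * \<phi> b"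
    and one: "\<phi> 1 = 1"
  shows "prime_ideal (\<phi> -` Q)"
proof -
  have "\<phi> 0 = 0" using add[of 0 0] by simp
  then have "is_ideal (\<phi> -` Q)"
    using prime_ideal_is_ideal[OF Q] unfolding is_ideal_def by (simp add: add mult)
  moreover have "1 \<notin> \<phi> -` Q" using one prime_ideal_one_notin[OF Q] by simp
  ultimately show ?thesis
    using prime_idealD[OF Q] unfolding prime_ideal_def by (metis UNIV_I mult vimage_eq)
qed

lemma ideal_principal_euclidean:
  fixes J :: "'a::euclidean_ring set"
  assumes J: "is_ideal J"
  obtains q where "q \<in> J" "\<And>h. h \<in> J \<Longrightarrow> q dvd h"
proof (cases "J \<subseteq> {0}")
  case True
  then show thesis using that[of 0] ideal_zero[OF J] by auto
next
  case False
  then obtain q where q: "q \<in> J" "q \<noteq> 0"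
    and qmin: "\<And>h. h \<in> J \<Longrightarrow> h \<noteq> 0 \<Longrightarrow> euclidean_size q \<le> euclidean_size h"
    using ex_has_least_nat[of "\<lambda>h. h \<in> J \<and> h \<noteq> 0" _ euclidean_size] by blast
  have "q dvd h" if "h \<in> J" for h
  proof -
    have "h mod q = h - (h div q) * q" by (simp add: minus_div_mult_eq_mod)
    also have "\<dots> \<in> J" by (rule ideal_diff[OF J that ideal_mult_left[OF J q(1)]])
    finally have "h mod q \<in> J" .
    then have "h mod q = 0" using qmin mod_size_less[OF q(2), of h] by fastforce
    then show ?thesis by (simp add: mod_eq_0_iff_dvd)
  qed
  then show thesis using that q(1) by blast
qed

lemma nonzero_prime_ideal_maximal_euclidean:
  fixes P J :: "'a::euclidean_ring set"
  assumes P: "prime_ideal P" "P \<noteq> {0}" and J: "is_ideal J" "P \<subseteq> J" "J \<noteq> UNIV"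
  shows "J = P"
proof -
  obtain p where p: "p \<in> P" "\<And>h. h \<in> P \<Longrightarrow> p dvd h"
    using ideal_principal_euclidean[OF prime_ideal_is_ideal[OF P(1)]] by blast
  obtain q where q: "q \<in> J" "\<And>h. h \<in> J \<Longrightarrow> q dvd h"
    using ideal_principal_euclidean[OF J(1)] by blast
  have "p \<noteq> 0" using P(2) p(2) prime_ideal_is_ideal[OF P(1)] ideal_zero by fastforce
  obtain e where pe: "p = q * e" using q(2) p(1) J(2) by blast
  consider "q \<in> P" | "e \<in> P" using prime_idealD[OF P(1)] p(1) pe by blast
  then show ?thesis
  proof cases
    case 1
    then have "J \<subseteq> P" using q(2) ideal_mult_right[OF prime_ideal_is_ideal[OF P(1)]] by fastforce
    then show ?thesis using J(2) by blast
  next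
    case 2
    then obtain t where "e = p * t" using p(2) by blast
    then have "p * (q * t) = p * 1" using pe by (metis mult.left_commute mult_1_right)
    then have "q * t = 1" using mult_left_cancel[OF \<open>p \<noteq> 0\<close>] by blast
    then have "1 \<in> J" using ideal_mult_right[OF J(1) q(1)] by metis
    then show ?thesis using J ideal_eq_UNIV_if_one by blast
  qed
qed

section \<open>Height and grade\<close>

definition prime_chain :: "'a::comm_ring_1 set \<Rightarrow> nat \<Rightarrow> (nat \<Rightarrow> 'a set) \<Rightarrow> bool" where
  "prime_chain I n C \<longleftrightarrow> (\<forall>i\<le>n. prime_ideal (C i) \<and> I \<subseteq> C i) \<and> (\<forall>i<n. C i \<subset> C (Suc i))"

lemma quot_height_prime_chain:
  "quot_height I P = Sup {enat n | n. \<exists>C. prime_chain I n C \<and> C n = P}"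
  unfolding quot_height_def prime_chain_def by (simp add: conj_assoc)

lemma prime_chain_snoc:
  assumes "prime_chain I n C" "C n \<subset> P" "prime_ideal P" "I \<subseteq> P"
  shows "prime_chain I (Suc n) (C(Suc n := P))"
  using assms unfolding prime_chain_def by (auto simp: le_Suc_eq less_Suc_eq)

lemma prime_chain_drop:
  assumes "prime_chain I n C" "k \<le> n"
  shows "prime_chain I (n - k) (\<lambda>i. C (k + i))"
  using assms unfolding prime_chain_def by auto

lemma quot_regular_seq_snocD:
  assumes "quot_regular_seq I (fs @ [x])"
  shows "quot_regular_seq I fs" and "regular_mod (ideal_gen (I \<union> set fs)) x"
proof -
  have "ideal_gen (I \<union> set fs) \<subseteq> ideal_gen (I \<union> set (fs @ [x]))"
    by (rule ideal_gen_mono) auto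
  then show "quot_regular_seq I fs"
    using assms unfolding quot_regular_seq_def by (auto simp: nth_append)
  show "regular_mod (ideal_gen (I \<union> set fs)) x"
    using assms unfolding quot_regular_seq_def regular_mod_def by (elim conjE allE[of _ "length fs"]) simp
qed

text \<open>Each element of the sequence, being regular modulo the earlier ones, lets us step down to a
  strictly smaller prime that still contains them.\<close>

lemma regular_seq_imp_prime_chain:
  assumes "quot_regular_seq I fs" "set fs \<subseteq> P" "prime_ideal P" "I \<subseteq> P"
  shows "\<exists>C. prime_chain I (length fs) C \<and> C (length fs) = P"
  using assms
proof (induction fs arbitrary: P rule: rev_induct)
  case Nil
  then show ?case by (intro exI[of _ "\<lambda>_. P"]) (simp add: prime_chain_def)
next
  case (snoc x fs)
  let ?J = "ideal_gen (I \<union> set fs)"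
  have "?J \<subseteq> P"
    using snoc.prems by (intro ideal_gen_least prime_ideal_is_ideal) auto
  then obtain Q where Q: "prime_ideal Q" "?J \<subseteq> Q" "Q \<subset> P"
    using exists_prime_ideal_below_regular[OF ideal_gen_is_ideal snoc.prems(3) _ _
        quot_regular_seq_snocD(2)[OF snoc.prems(1)]] snoc.prems(2) by auto
  then have "I \<subseteq> Q" "set fs \<subseteq> Q" using ideal_gen_superset by blast+
  then obtain C where "prime_chain I (length fs) C" "C (length fs) = Q"
    using snoc.IH[OF quot_regular_seq_snocD(1)[OF snoc.prems(1)] _ Q(1)] by blast
  then show ?case
    using prime_chain_snoc[of I "length fs" C P] Q(3) snoc.prems(3,4) by (intro exI) auto
qed

lemma quot_grade_le_height:
  assumes "prime_ideal P" "I \<subseteq> P"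
  shows "quot_grade I P \<le> quot_height I P"
  unfolding quot_grade_def quot_height_prime_chain
  using regular_seq_imp_prime_chain[OF _ _ assms] by (intro Sup_least Sup_upper2) auto

lemma Sup_enat_eqI: "(x :: enat) \<in> A \<Longrightarrow> (\<And>y. y \<in> A \<Longrightarrow> y \<le> x) \<Longrightarrow> Sup A = x"
  by (simp add: Sup_upper antisym Sup_least)

lemma quot_height_eq_1I:
  assumes "prime_chain I 1 C" "C 1 = P" and no_chain: "\<And>C. \<not> prime_chain I 2 C"
  shows "quot_height I P = 1"
  unfolding quot_height_prime_chain
proof (rule Sup_enat_eqI)
  show "1 \<in> {enat n | n. \<exists>C. prime_chain I n C \<and> C n = P}"
    using assms(1,2) by (auto simp: one_enat_def)
next
  fix y assume "y \<in> {enat n | n. \<exists>C. prime_chain I n C \<and> C n = P}"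
  then obtain n C where "y = enat n" "prime_chain I n C" by blast
  moreover have "n \<le> 1"
    using prime_chain_drop[OF \<open>prime_chain I n C\<close>, of "n - 2"] no_chain
    by (cases "n \<le> 1") auto
  ultimately show "y \<le> 1" by (simp add: one_enat_def)
qed

lemma quot_grade_eq_0I:
  assumes "is_ideal I" and "\<And>f. f \<in> M \<Longrightarrow> \<not> regular_mod I f"
  shows "quot_grade I M = 0"
proof -
  have "fs = []" if "set fs \<subseteq> M" "quot_regular_seq I fs" for fs
  proof (rule ccontr)
    assume "fs \<noteq> []"
    then have "regular_mod I (fs ! 0)"
      using that(2) ideal_gen_ideal[OF assms(1)] unfolding quot_regular_seq_def regular_mod_def by auto
    moreover have "fs ! 0 \<in> M" using \<open>fs \<noteq> []\<close> that(1) by auto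
    ultimately show False using assms(2) by blast
  qed
  then have "quot_grade I M \<le> 0" unfolding quot_grade_def by (intro Sup_least) (auto simp: zero_enat_def)
  then show ?thesis by simp
qed

lemma quot_regular_seq_singleton:
  assumes "is_ideal I"
  shows "quot_regular_seq I [f] \<longleftrightarrow> regular_mod I f \<and> ideal_gen (insert f I) \<noteq> UNIV"
  using ideal_gen_ideal[OF assms] unfolding quot_regular_seq_def regular_mod_def by simp

lemma quot_grade_eq_1I:
  assumes I: "is_ideal I" and M: "prime_ideal M" "I \<subseteq> M" "quot_height I M = 1"
    and f: "f \<in> M" "regular_mod I f"
  shows "quot_grade I M = 1"
proof (rule antisym)
  show "quot_grade I M \<le> 1" using quot_grade_le_height[OF M(1,2)] M(3) by simp
  have "ideal_gen (insert f I) \<subseteq> M"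
    using M(1,2) f(1) by (intro ideal_gen_least prime_ideal_is_ideal) auto
  then have "quot_regular_seq I [f]"
    using f(2) prime_ideal_not_UNIV[OF M(1)] unfolding quot_regular_seq_singleton[OF I] by blast
  then have "enat (length [f]) \<in> {enat (length fs) | fs. set fs \<subseteq> M \<and> quot_regular_seq I fs}"
    using f(1) by (intro CollectI exI[of _ "[f]"]) simp
  then show "1 \<le> quot_grade I M" unfolding quot_grade_def by (simp add: Sup_upper one_enat_def)
qed

section \<open>Monomial ideals and polynomials in one variable\<close>

abbreviation lookup :: "('a \<Rightarrow>\<^sub>0 'b::zero) \<Rightarrow> 'a \<Rightarrow> 'b" where "lookup \<equiv> Poly_Mapping.lookup"
abbreviation keys :: "('a \<Rightarrow>\<^sub>0 'b::zero) \<Rightarrow> 'a set" where "keys \<equiv> Poly_Mapping.keys"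
abbreviation single :: "'a \<Rightarrow> 'b::zero \<Rightarrow> 'a \<Rightarrow>\<^sub>0 'b" where "single \<equiv> Poly_Mapping.single"

lemma Var_power: "(Var v :: ('v, 'k::comm_ring_1) mpoly) ^ n = single (single v n) 1"
  by (induction n) (simp_all add: Var_def mult_single single_add[symmetric] add.commute)

lemma Var_mult_Var_power:
  "(Var i * Var j ^ n :: ('v, 'k::comm_ring_1) mpoly) = single (single i 1 + single j n) 1"
  by (simp add: Var_power) (simp add: Var_def mult_single)

lemma lookup_mult_single:
  fixes g :: "('v, 'k::comm_ring_1) mpoly"
  shows "lookup (g * single s a) (m + s) = lookup g m * a"
proof -
  have "Sum_any (\<lambda>s'. (a when s = s') when m + s = m' + s') = (a when m + s = m' + s)" for m'
  proof -
    have "Sum_any (\<lambda>s'. (a when s = s') when m + s = m' + s')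
        = Sum_any (\<lambda>s'. (a when m + s = m' + s') when s' = s)"
      by (intro Sum_any.cong) (auto simp: when_def)
    then show ?thesis by simp
  qed
  then have "lookup (g * single s a) (m + s) = Sum_any (\<lambda>m'. lookup g m' * (a when m + s = m' + s))"
    by (simp add: lookup_mult lookup_single)
  also have "\<dots> = Sum_any (\<lambda>m'. lookup g m' * a when m' = m)"
    by (intro Sum_any.cong) (auto simp: when_def)
  finally show ?thesis by simp
qed

text \<open>\<open>monomial_ideal_on UNIV S\<close> is the monomial ideal generated by the \<open>x\<^sup>s\<close>, \<open>s \<in> S\<close>;
  \<open>monomial_ideal_on (- {v}) S\<close> ignores the exponent of \<open>x\<^sub>v\<close>, so it is the saturation
  of that ideal with respect to \<open>x\<^sub>v\<close>.\<close>

definition divides_on :: "'v set \<Rightarrow> ('v \<Rightarrow>\<^sub>0 nat) \<Rightarrow> ('v \<Rightarrow>\<^sub>0 nat) \<Rightarrow> bool" where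
  "divides_on X s m \<longleftrightarrow> (\<forall>v\<in>X. lookup s v \<le> lookup m v)"

definition monomial_ideal_on :: "'v set \<Rightarrow> ('v \<Rightarrow>\<^sub>0 nat) set \<Rightarrow> ('v, 'k::comm_ring_1) mpoly set" where
  "monomial_ideal_on X S = {f. \<forall>m\<in>keys f. \<exists>s\<in>S. divides_on X s m}"

lemma divides_on_single: "v \<in> X \<Longrightarrow> divides_on X (single v n) m \<longleftrightarrow> n \<le> lookup m v"
  unfolding divides_on_def by (auto simp: lookup_single when_def)

lemma divides_on_add: "divides_on X s m \<Longrightarrow> divides_on X s (m' + m)"
  unfolding divides_on_def by (simp add: lookup_add trans_le_add2)

lemma monomial_ideal_on_is_ideal: "is_ideal (monomial_ideal_on X S :: ('v, 'k::comm_ring_1) mpoly set)"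
proof (unfold is_ideal_def, intro conjI ballI allI)
  show "0 \<in> monomial_ideal_on X S" by (simp add: monomial_ideal_on_def)
next
  fix f g :: "('v, 'k) mpoly"
  assume "f \<in> monomial_ideal_on X S" "g \<in> monomial_ideal_on X S"
  then show "f + g \<in> monomial_ideal_on X S"
    using keys_add[of f g] unfolding monomial_ideal_on_def by blast
next
  fix f r :: "('v, 'k) mpoly"
  assume f: "f \<in> monomial_ideal_on X S"
  show "r * f \<in> monomial_ideal_on X S"
    unfolding monomial_ideal_on_def
  proof (intro CollectI ballI)
    fix m assume "m \<in> keys (r * f)"
    then obtain a b where "m = a + b" "b \<in> keys f" using keys_mult[of r f] by blast
    then show "\<exists>s\<in>S. divides_on X s m" using f divides_on_add unfolding monomial_ideal_on_def by blast
  qed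
qed

lemma single_mem_monomial_ideal_on:
  "single m k \<in> monomial_ideal_on X S \<longleftrightarrow> k = 0 \<or> (\<exists>s\<in>S. divides_on X s m)"
  unfolding monomial_ideal_on_def by auto

lemma monomial_ideal_on_antimono: "Y \<subseteq> X \<Longrightarrow> monomial_ideal_on X S \<subseteq> monomial_ideal_on Y S"
  unfolding monomial_ideal_on_def divides_on_def by blast

lemma update_eq_add_single: "m \<notin> keys f \<Longrightarrow> Poly_Mapping.update m k f = f + single m k"
  by (rule poly_mapping_eqI) (auto simp: lookup_update lookup_add lookup_single in_keys_iff when_def)

lemma monomial_ideal_eq_ideal_gen:
  "monomial_ideal_on UNIV S = ideal_gen ((\<lambda>s. single s 1) ` S :: ('v, 'k::comm_ring_1) mpoly set)"
proof
  show "ideal_gen ((\<lambda>s. single s 1) ` S) \<subseteq> (monomial_ideal_on UNIV S :: ('v, 'k) mpoly set)"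
    by (rule ideal_gen_least[OF monomial_ideal_on_is_ideal])
      (auto simp: single_mem_monomial_ideal_on divides_on_def)
  show "monomial_ideal_on UNIV S \<subseteq> ideal_gen ((\<lambda>s. single s 1) ` S :: ('v, 'k) mpoly set)"
  proof
    fix f :: "('v, 'k) mpoly"
    assume "f \<in> monomial_ideal_on UNIV S"
    then show "f \<in> ideal_gen ((\<lambda>s. single s 1) ` S)"
    proof (induction f rule: update_induct)
      case const
      then show ?case by (simp add: ideal_zero[OF ideal_gen_is_ideal])
    next
      case (update f m k)
      have upd: "Poly_Mapping.update m k f = f + single m k"
        using update.hyps(1) by (rule update_eq_add_single)
      have keys_upd: "keys (Poly_Mapping.update m k f) = insert m (keys f)"
        using update.hyps by (simp add: keys_update)
      then have f: "f \<in> ideal_gen ((\<lambda>s. single s 1) ` S)"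
        using update.prems by (intro update.IH) (auto simp: monomial_ideal_on_def)
      obtain s where s: "s \<in> S" "divides_on UNIV s m"
        using update.prems keys_upd unfolding monomial_ideal_on_def by auto
      then have "m = (m - s) + s"
        by (intro poly_mapping_eqI) (auto simp: divides_on_def lookup_add lookup_minus)
      then have "single m k = single (m - s) k * single s 1"
        by (simp only: mult_single mult_1_right flip: \<open>m = (m - s) + s\<close>)
      also have "\<dots> \<in> ideal_gen ((\<lambda>s. single s 1) ` S)"
        using s(1) ideal_gen_superset[of "(\<lambda>s. single s 1) ` S"]
        by (intro ideal_mult_left[OF ideal_gen_is_ideal]) auto
      finally have "single m k \<in> ideal_gen ((\<lambda>s. single s 1) ` S)" .
      then show ?case using f by (simp add: upd ideal_add[OF ideal_gen_is_ideal])
    qed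
  qed
qed

lemma ideal_gen_Var_eq:
  "ideal_gen (Var ` X) = (monomial_ideal_on UNIV ((\<lambda>v. single v 1) ` X) :: ('v, 'k::comm_ring_1) mpoly set)"
  by (simp add: monomial_ideal_eq_ideal_gen image_image Var_def)

definition poly_in :: "'v \<Rightarrow> 'k::comm_ring_1 poly \<Rightarrow> ('v, 'k) mpoly" where
  "poly_in v h = poly (map_poly (single 0) h) (Var v)"

lemma poly_in_pCons: "poly_in v (pCons a h) = single 0 a + Var v * poly_in v h"
  by (simp add: poly_in_def map_poly_pCons)

lemma poly_in_0 [simp]: "poly_in v 0 = 0"
  by (simp add: poly_in_def)

lemma poly_in_const: "poly_in v [:a:] = single 0 a"
  by (simp add: poly_in_pCons)

lemma poly_in_add:
  fixes v :: 'v and p q :: "'k::comm_ring_1 poly"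
  shows "poly_in v (p + q) = poly_in v p + poly_in v q"
proof -
  have "map_poly (single 0) (p + q) = (map_poly (single 0) p + map_poly (single 0) q :: ('v, 'k) mpoly poly)"
    by (rule poly_eqI) (simp add: coeff_map_poly single_add)
  then show ?thesis by (simp add: poly_in_def)
qed

lemma poly_in_mult: "poly_in v (p * q) = poly_in v p * poly_in v q"
proof (induction p)
  case (pCons a p)
  have "poly_in v (pCons a p * q) = poly_in v (smult a q) + Var v * poly_in v (p * q)"
    by (simp add: poly_in_add poly_in_pCons)
  also have "poly_in v (smult a q) = single 0 a * poly_in v q"
    by (simp add: poly_in_def map_poly_smult mult_single)
  finally show ?case by (simp add: pCons.IH poly_in_pCons algebra_simps)
qed simp

lemma poly_in_1 [simp]: "poly_in v 1 = 1"
  by (simp add: one_pCons poly_in_const del: pCons_one)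

lemma poly_in_monom: "poly_in v (monom a n) = single (single v n) a"
  by (simp add: poly_in_def map_poly_monom poly_monom Var_power mult_single)

lemma poly_in_eq_sum:
  fixes v :: 'v and h :: "'k::comm_ring_1 poly"
  shows "poly_in v h = (\<Sum>i\<le>degree h. single (single v i) (coeff h i))"
proof -
  have "degree (map_poly (single (0 :: 'v \<Rightarrow>\<^sub>0 nat)) h) = degree h"
    by (rule degree_map_poly) (metis single_zero inj_single injD)
  then show ?thesis
    by (simp add: poly_in_def poly_altdef coeff_map_poly Var_power mult_single)
qed

text \<open>If the monomial \<open>m\<^sub>0\<close> of \<open>g\<close> lies outside \<open>B\<close>, let \<open>j\<close> be maximal such that \<open>m\<^sub>0 x\<^sub>c\<^bsup>j\<^esup>\<close> is a
  monomial of \<open>g\<close>. The only contribution to the coefficient of \<open>m\<^sub>0 x\<^sub>c\<^bsup>j + deg h\<^esup>\<close> in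
  \<open>g * h(x\<^sub>c)\<close> is the product of the two leading coefficients, so this monomial lies in \<open>B\<close>.\<close>

lemma keys_mult_poly_in_subsetD:
  fixes g :: "('v, 'k::idom) mpoly"
  assumes h: "h \<noteq> 0" and B: "\<And>m j. m + single c j \<in> B \<longleftrightarrow> m \<in> B"
    and gh: "keys (g * poly_in c h) \<subseteq> B"
  shows "keys g \<subseteq> B"
proof
  fix m0 assume m0: "m0 \<in> keys g"
  define J where "J = {j. m0 + single c j \<in> keys g}"
  have "inj (\<lambda>j. m0 + single c j)"
    by (rule injI) (metis add_left_imp_eq inj_single injD)
  then have "finite J"
    unfolding J_def using finite_vimageI[of "keys g" "\<lambda>j. m0 + single c j"] by (simp add: vimage_def)
  moreover have "0 \<in> J" unfolding J_def using m0 by simp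
  ultimately have jm: "Max J \<in> J" "\<And>j. j \<in> J \<Longrightarrow> j \<le> Max J"
    using Max_in Max_ge by blast+
  define D where "D = degree h"
  define k where "k = m0 + single c (Max J + D)"
  have "lookup (g * single (single c i) (coeff h i)) k
      = lookup g (m0 + single c (Max J + D - i)) * coeff h i"
    if "i \<le> D" for i
  proof -
    have "k = (m0 + single c (Max J + D - i)) + single c i"
      using that by (simp add: k_def add.assoc flip: single_add)
    then show ?thesis by (simp add: lookup_mult_single)
  qed
  then have "lookup (g * poly_in c h) k = (\<Sum>i\<le>D. lookup g (m0 + single c (Max J + D - i)) * coeff h i)"
    by (simp add: poly_in_eq_sum D_def sum_distrib_left lookup_sum)
  also have "\<dots> = (\<Sum>i<D. lookup g (m0 + single c (Max J + D - i)) * coeff h i)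
      + lookup g (m0 + single c (Max J + D - D)) * coeff h D"
    by (simp add: lessThan_Suc_atMost[symmetric])
  also have "\<dots> = lookup g (m0 + single c (Max J)) * coeff h D"
  proof -
    have "lookup g (m0 + single c (Max J + D - i)) = 0" if "i < D" for i
      using jm(2)[of "Max J + D - i"] that unfolding J_def by (force simp: in_keys_iff)
    then show ?thesis by simp
  qed
  also have "\<dots> \<noteq> 0"
    using jm(1) h unfolding J_def D_def by (simp add: in_keys_iff)
  finally have "k \<in> B" using gh by (auto simp: in_keys_iff)
  then show "m0 \<in> B" unfolding k_def using B by simp
qed

lemma regular_mod_poly_in:
  fixes h :: "'k::idom poly"
  assumes "h \<noteq> 0" and "\<forall>s\<in>S. c \<in> X \<longrightarrow> lookup s c = 0"
  shows "regular_mod (monomial_ideal_on X S :: ('v, 'k) mpoly set) (poly_in c h)"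
  unfolding regular_mod_def
proof (intro allI impI)
  fix g :: "('v, 'k) mpoly"
  let ?B = "{m. \<exists>s\<in>S. divides_on X s m}"
  have "divides_on X s (m + single c j) \<longleftrightarrow> divides_on X s m" if "s \<in> S" for s m j
  proof -
    have "lookup (m + single c j) v = (if v = c then lookup m v + j else lookup m v)" for v
      by (simp add: lookup_add lookup_single)
    then show ?thesis using assms(2) that unfolding divides_on_def by auto
  qed
  then have "m + single c j \<in> ?B \<longleftrightarrow> m \<in> ?B" for m j by blast
  moreover assume "g * poly_in c h \<in> monomial_ideal_on X S"
  then have "keys (g * poly_in c h) \<subseteq> ?B" unfolding monomial_ideal_on_def by blast
  ultimately have "keys g \<subseteq> ?B" by (rule keys_mult_poly_in_subsetD[OF assms(1)])
  then show "g \<in> monomial_ideal_on X S" unfolding monomial_ideal_on_def by blast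
qed

section \<open>Ideals generated by variables\<close>

lemma exists_poly_in_decomposition:
  fixes f :: "('v, 'k::comm_ring_1) mpoly"
  obtains f' h where "f = f' + poly_in c h" "f' \<in> ideal_gen (Var ` (- {c}))"
proof -
  let ?P = "ideal_gen (Var ` (- {c})) :: ('v, 'k) mpoly set"
  have "\<exists>f' h. f = f' + poly_in c h \<and> f' \<in> ?P"
  proof (induction f rule: update_induct)
    case const
    show ?case by (intro exI[of _ 0]) (simp add: ideal_zero[OF ideal_gen_is_ideal])
  next
    case (update f m k)
    then obtain f' h where f': "f = f' + poly_in c h" "f' \<in> ?P" by blast
    have upd: "Poly_Mapping.update m k f = f + single m k"
      using update.hyps(1) by (rule update_eq_add_single)
    show ?case
    proof (cases "\<exists>v. v \<noteq> c \<and> 0 < lookup m v")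
      case True
      then obtain v where v: "v \<noteq> c" "0 < lookup m v" by blast
      then have "m = (m - single v 1) + single v 1"
        by (intro poly_mapping_eqI) (auto simp: lookup_add lookup_minus lookup_single when_def)
      then have "single m k = single (m - single v 1) k * Var v"
        by (simp only: Var_def mult_single mult_1_right flip: \<open>m = (m - single v 1) + single v 1\<close>)
      also have "\<dots> \<in> ?P"
        using v(1) ideal_gen_superset[of "Var ` (- {c})"]
        by (intro ideal_mult_left[OF ideal_gen_is_ideal]) auto
      finally have "f' + single m k \<in> ?P" by (rule ideal_add[OF ideal_gen_is_ideal f'(2)])
      moreover have "Poly_Mapping.update m k f = (f' + single m k) + poly_in c h"
        using upd f'(1) by (simp add: algebra_simps)
      ultimately show ?thesis by blast
    next
      case False
      then have "m = single c (lookup m c)"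
        by (intro poly_mapping_eqI) (auto simp: lookup_single when_def)
      then have "poly_in c (monom k (lookup m c)) = single m k"
        by (simp only: poly_in_monom flip: \<open>m = single c (lookup m c)\<close>)
      then have "Poly_Mapping.update m k f = f' + poly_in c (h + monom k (lookup m c))"
        using upd f'(1) by (simp add: poly_in_add algebra_simps)
      then show ?thesis using f'(2) by blast
    qed
  qed
  then show thesis using that by blast
qed

lemma Var_notin_ideal_gen_Var: "c \<notin> X \<Longrightarrow> (Var c :: ('v, 'k::comm_ring_1) mpoly) \<notin> ideal_gen (Var ` X)"
  unfolding ideal_gen_Var_eq
  by (auto simp: Var_def single_mem_monomial_ideal_on divides_on_single lookup_single when_def)

lemma one_notin_ideal_gen_Var: "(1 :: ('v, 'k::comm_ring_1) mpoly) \<notin> ideal_gen (Var ` X)"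
  by (auto simp: ideal_gen_Var_eq single_mem_monomial_ideal_on divides_on_single simp flip: single_one)

lemma prime_ideal_Var_compl: "prime_ideal (ideal_gen (Var ` (- {c})) :: ('v, 'k::idom) mpoly set)"
  unfolding prime_ideal_def
proof (intro conjI allI impI)
  let ?P = "ideal_gen (Var ` (- {c})) :: ('v, 'k) mpoly set"
  show iP: "is_ideal ?P" by (rule ideal_gen_is_ideal)
  show "?P \<noteq> UNIV" using one_notin_ideal_gen_Var by blast
  fix f g :: "('v, 'k) mpoly"
  assume fg: "f * g \<in> ?P"
  show "f \<in> ?P \<or> g \<in> ?P"
  proof (cases "f \<in> ?P")
    case False
    obtain f' h where f: "f = f' + poly_in c h" "f' \<in> ?P" by (rule exists_poly_in_decomposition)
    with False have "h \<noteq> 0" by auto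
    have "g * poly_in c h = f * g - g * f'" using f(1) by (simp add: algebra_simps)
    also have "\<dots> \<in> ?P" by (rule ideal_diff[OF iP fg ideal_mult_left[OF iP f(2)]])
    finally have "g * poly_in c h \<in> ?P" .
    moreover have "regular_mod ?P (poly_in c h)"
      unfolding ideal_gen_Var_eq using \<open>h \<noteq> 0\<close> by (rule regular_mod_poly_in) (auto simp: lookup_single)
    ultimately show ?thesis unfolding regular_mod_def by blast
  qed simp
qed

lemma maximal_ideal_Var: "maximal_ideal (ideal_gen (range Var) :: ('v, 'k::field) mpoly set)"
  unfolding maximal_ideal_def
proof (intro conjI allI impI)
  let ?Z = "ideal_gen (range Var) :: ('v, 'k) mpoly set"
  show "is_ideal ?Z" by (rule ideal_gen_is_ideal)
  show "?Z \<noteq> UNIV" using one_notin_ideal_gen_Var by blast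
  fix J :: "('v, 'k) mpoly set"
  assume J: "is_ideal J \<and> ?Z \<subseteq> J"
  show "J = ?Z \<or> J = UNIV"
  proof (cases "J = ?Z")
    case False
    then obtain f where f: "f \<in> J" "f \<notin> ?Z" using J by blast
    define a where "a = lookup f 0"
    have "f - single 0 a \<in> ?Z"
      unfolding ideal_gen_Var_eq monomial_ideal_on_def
    proof (intro CollectI ballI)
      fix m assume "m \<in> keys (f - single 0 a)"
      then have "m \<noteq> 0" by (auto simp: in_keys_iff lookup_minus a_def)
      then obtain v where "lookup m v \<noteq> 0" by (metis lookup_zero poly_mapping_eqI)
      then show "\<exists>s\<in>range (\<lambda>v. single v 1). divides_on UNIV s m"
        by (intro bexI[of _ "single v 1"]) (auto simp: divides_on_single)
    qed
    then have "a \<noteq> 0" using f(2) by auto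
    have "single 0 a = f - (f - single 0 a)" by simp
    also have "\<dots> \<in> J" using J f(1) \<open>f - single 0 a \<in> ?Z\<close> by (blast intro: ideal_diff)
    finally have "single 0 (inverse a) * single 0 a \<in> J" using J by (blast intro: ideal_mult_left)
    then have "1 \<in> J" using \<open>a \<noteq> 0\<close> by (simp add: mult_single)
    then show ?thesis using J ideal_eq_UNIV_if_one by blast
  qed simp
qed

lemma not_maximal_ideal_Var_compl:
  "\<not> maximal_ideal (ideal_gen (Var ` (- {c})) :: ('v, 'k::field) mpoly set)"
proof
  let ?Z = "ideal_gen (range Var) :: ('v, 'k) mpoly set"
  assume "maximal_ideal (ideal_gen (Var ` (- {c})) :: ('v, 'k) mpoly set)"
  moreover have "ideal_gen (Var ` (- {c})) \<subseteq> ?Z" by (rule ideal_gen_mono) auto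
  moreover have "Var c \<in> ?Z" using ideal_gen_superset by blast
  ultimately show False
    using maximal_ideal_Var[where 'k = 'k] Var_notin_ideal_gen_Var[of c "- {c}"]
    unfolding maximal_ideal_def by blast
qed

lemma exists_poly_in_between:
  fixes Q Q' :: "('v, 'k::comm_ring_1) mpoly set"
  assumes "is_ideal Q" "is_ideal Q'" "ideal_gen (Var ` (- {c})) \<subseteq> Q" "Q \<subset> Q'"
  obtains h where "poly_in c h \<in> Q'" "poly_in c h \<notin> Q"
proof -
  obtain f where f: "f \<in> Q'" "f \<notin> Q" using assms(4) by blast
  obtain f' h where d: "f = f' + poly_in c h" "f' \<in> ideal_gen (Var ` (- {c}))"
    by (rule exists_poly_in_decomposition)
  then have "f' \<in> Q" using assms(3) by blast
  then have "poly_in c h \<in> Q'" "poly_in c h \<notin> Q"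
    using d(1) f ideal_diff[OF assms(2) f(1), of f'] ideal_add[OF assms(1) \<open>f' \<in> Q\<close>, of "poly_in c h"]
      assms(4)
    by auto
  then show thesis by (rule that)
qed

text \<open>Modulo the variables other than \<open>x\<^sub>c\<close> the ring becomes \<open>K[x\<^sub>c]\<close>, in which nonzero primes
  are maximal; so a chain of primes above them has length at most one.\<close>

lemma no_prime_chain_above_Var_compl:
  fixes Q0 Q1 Q2 :: "('v, 'k::field) mpoly set"
  assumes P: "prime_ideal Q0" "prime_ideal Q1" "prime_ideal Q2"
    and c: "ideal_gen (Var ` (- {c})) \<subseteq> Q0" and chain: "Q0 \<subset> Q1" "Q1 \<subset> Q2"
  shows False
proof -
  have K: "prime_ideal (poly_in c -` Q)" if "prime_ideal Q" for Q :: "('v, 'k) mpoly set"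
    using that by (rule prime_ideal_vimage) (simp_all add: poly_in_add poly_in_mult)
  obtain h1 where h1: "poly_in c h1 \<in> Q1" "poly_in c h1 \<notin> Q0"
    using exists_poly_in_between[OF prime_ideal_is_ideal[OF P(1)] prime_ideal_is_ideal[OF P(2)] c chain(1)] .
  obtain h2 where h2: "poly_in c h2 \<in> Q2" "poly_in c h2 \<notin> Q1"
    using exists_poly_in_between[OF prime_ideal_is_ideal[OF P(2)] prime_ideal_is_ideal[OF P(3)] _ chain(2)]
      c chain(1) by blast
  have "h1 \<noteq> 0" using h1(2) ideal_zero[OF prime_ideal_is_ideal[OF P(1)]] by auto
  then have "poly_in c -` Q1 \<noteq> {0}" using h1(1) by blast
  moreover have "poly_in c -` Q1 \<subseteq> poly_in c -` Q2" using chain(2) by blast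
  ultimately have "poly_in c -` Q2 = poly_in c -` Q1"
    using nonzero_prime_ideal_maximal_euclidean[OF K[OF P(2)]] K[OF P(3)]
    by (simp add: prime_ideal_is_ideal prime_ideal_not_UNIV)
  then show False using h2 by blast
qed

section \<open>Edge ideals of oriented triangles\<close>

lemma orientation_C3_graphD:
  assumes "is_orientation C3_graph E"
  shows orientation_C3_graph_irrefl: "(i, j) \<in> E \<Longrightarrow> i \<noteq> j"
    and orientation_C3_graph_tournament: "i \<noteq> j \<Longrightarrow> (i, j) \<in> E \<longleftrightarrow> (j, i) \<notin> E"
  using assms unfolding is_orientation_def C3_graph_def by blast+

definition edge_exponents :: "('v \<times> 'v) set \<Rightarrow> ('v \<Rightarrow> nat) \<Rightarrow> ('v \<Rightarrow>\<^sub>0 nat) set" where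
  "edge_exponents E w = {single i 1 + single j (w j) | i j. (i, j) \<in> E}"

lemma edge_exponents_memI: "(i, j) \<in> E \<Longrightarrow> single i 1 + single j (w j) \<in> edge_exponents E w"
  unfolding edge_exponents_def by blast

lemma edge_ideal_eq_monomial_ideal:
  "(edge_ideal E w :: ('v, 'k::comm_ring_1) mpoly set) = monomial_ideal_on UNIV (edge_exponents E w)"
proof -
  have "(\<lambda>s. single s 1) ` edge_exponents E w
      = ({Var i * Var j ^ w j | i j. (i, j) \<in> E} :: ('v, 'k) mpoly set)"
    unfolding edge_exponents_def by (auto simp: Var_mult_Var_power)
  then show ?thesis unfolding edge_ideal_def monomial_ideal_eq_ideal_gen by simp
qed

lemma Var_mult_Var_power_mem_edge_ideal: "(i, j) \<in> E \<Longrightarrow> Var i * Var j ^ w j \<in> edge_ideal E w"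
  unfolding edge_ideal_def by (rule ideal_gen_superset[THEN subsetD]) blast

lemma edge_ideal_is_ideal: "is_ideal (edge_ideal E w)"
  unfolding edge_ideal_def by (rule ideal_gen_is_ideal)

lemma divides_on_edge_exponent:
  assumes "i \<noteq> j"
  shows "divides_on X (single i 1 + single j n) m \<longleftrightarrow> (i \<in> X \<longrightarrow> 1 \<le> lookup m i) \<and> (j \<in> X \<longrightarrow> n \<le> lookup m j)"
proof -
  have "lookup (single i 1 + single j n) v = (if v = i then 1 else if v = j then n else 0)" for v
    using assms by (simp add: lookup_add lookup_single)
  then show ?thesis using assms unfolding divides_on_def by auto
qed

lemma edge_ideal_subset_Var_compl:
  assumes "\<And>i j. (i, j) \<in> E \<Longrightarrow> i \<noteq> j" and "\<forall>x. w x > 0"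
  shows "(edge_ideal E w :: ('v, 'k::comm_ring_1) mpoly set) \<subseteq> ideal_gen (Var ` (- {c}))"
  unfolding edge_ideal_def
proof (rule ideal_gen_least[OF ideal_gen_is_ideal], safe)
  let ?P = "ideal_gen (Var ` (- {c})) :: ('v, 'k) mpoly set"
  fix i j assume "(i, j) \<in> E"
  have Var_mem: "Var v \<in> ?P" if "v \<noteq> c" for v
    using that ideal_gen_superset[of "Var ` (- {c})"] by blast
  have "i \<noteq> c \<or> j \<noteq> c" using assms(1) \<open>(i, j) \<in> E\<close> by blast
  then show "Var i * Var j ^ w j \<in> ?P"
  proof
    assume "i \<noteq> c"
    then show ?thesis by (rule ideal_mult_right[OF ideal_gen_is_ideal Var_mem])
  next
    assume "j \<noteq> c"
    then have "Var j ^ w j \<in> ?P" using assms(2) by (simp add: ideal_power[OF ideal_gen_is_ideal Var_mem])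
    then show ?thesis by (rule ideal_mult_left[OF ideal_gen_is_ideal])
  qed
qed

lemma prime_over_edge_ideal_contains_Var_compl:
  assumes O: "is_orientation C3_graph E" and Q: "prime_ideal Q" and IQ: "edge_ideal E w \<subseteq> Q"
  obtains c where "ideal_gen (Var ` (- {c})) \<subseteq> Q"
proof -
  have cover: "Var i \<in> Q \<or> Var j \<in> Q" if "i \<noteq> j" for i j
  proof -
    have "(i, j) \<in> E \<or> (j, i) \<in> E" using orientation_C3_graph_tournament[OF O that] by blast
    then have "Var i * Var j ^ w j \<in> Q \<or> Var j * Var i ^ w i \<in> Q"
      using IQ Var_mult_Var_power_mem_edge_ideal[of i j E w] Var_mult_Var_power_mem_edge_ideal[of j i E w]
      by blast
    then show ?thesis
    proof
      assume "Var i * Var j ^ w j \<in> Q"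
      then have "Var i \<in> Q \<or> Var j ^ w j \<in> Q" by (rule prime_idealD[OF Q])
      then show ?thesis using prime_ideal_power[OF Q, of "Var j" "w j"] by blast
    next
      assume "Var j * Var i ^ w i \<in> Q"
      then have "Var j \<in> Q \<or> Var i ^ w i \<in> Q" by (rule prime_idealD[OF Q])
      then show ?thesis using prime_ideal_power[OF Q, of "Var i" "w i"] by blast
    qed
  qed
  obtain c where "Var ` (- {c}) \<subseteq> Q"
  proof (cases "\<exists>c. Var c \<notin> Q")
    case True
    then obtain c where c: "Var c \<notin> Q" by blast
    have "Var v \<in> Q" if "v \<noteq> c" for v using cover[OF that] c by blast
    then show thesis using that[of c] by blast
  next
    case False
    then show thesis using that by blast
  qed
  then show thesis using that ideal_gen_least[OF prime_ideal_is_ideal[OF Q]] by blast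

qed

lemma no_prime_chain_2_edge_ideal:
  assumes "is_orientation C3_graph E"
  shows "\<not> prime_chain (edge_ideal E w :: ('v, 'k::field) mpoly set) 2 C"
proof
  assume "prime_chain (edge_ideal E w) 2 C"
  then have P: "prime_ideal (C 0)" "prime_ideal (C 1)" "prime_ideal (C 2)"
    and "edge_ideal E w \<subseteq> C 0" "C 0 \<subset> C 1" "C 1 \<subset> C 2"
    unfolding prime_chain_def by (auto simp: numeral_2_eq_2 less_Suc_eq)
  moreover obtain c where "ideal_gen (Var ` (- {c})) \<subseteq> C 0"
    using prime_over_edge_ideal_contains_Var_compl[OF assms P(1) \<open>edge_ideal E w \<subseteq> C 0\<close>] .
  ultimately show False by (intro no_prime_chain_above_Var_compl)
qed

lemma quot_height_edge_ideal:
  fixes M :: "('v, 'k::field) mpoly set"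
  assumes O: "is_orientation C3_graph E" and w: "\<forall>x. w x > 0"
    and M: "maximal_ideal M" "edge_ideal E w \<subseteq> M"
  shows "quot_height (edge_ideal E w) M = 1"
proof -
  have PM: "prime_ideal M" using maximal_ideal_imp_prime[OF M(1)] .
  obtain c where cM: "ideal_gen (Var ` (- {c})) \<subseteq> M"
    using prime_over_edge_ideal_contains_Var_compl[OF O PM M(2)] .
  let ?P = "ideal_gen (Var ` (- {c})) :: ('v, 'k) mpoly set"
  have "?P \<noteq> M" using M(1) not_maximal_ideal_Var_compl by metis
  then have "prime_chain (edge_ideal E w) 1 (\<lambda>i. if i = 0 then ?P else M)"
    using prime_ideal_Var_compl edge_ideal_subset_Var_compl[OF orientation_C3_graph_irrefl[OF O] w]
      cM PM M(2)
    unfolding prime_chain_def by (auto simp: le_Suc_eq)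
  then show ?thesis
    by (rule quot_height_eq_1I) (simp_all add: no_prime_chain_2_edge_ideal[OF O])
qed

definition edge_ideal_sat :: "('v \<times> 'v) set \<Rightarrow> ('v \<Rightarrow> nat) \<Rightarrow> 'v \<Rightarrow> ('v, 'k::comm_ring_1) mpoly set" where
  "edge_ideal_sat E w v = monomial_ideal_on (- {v}) (edge_exponents E w)"

lemma edge_ideal_subset_sat: "edge_ideal E w \<subseteq> edge_ideal_sat E w v"
  unfolding edge_ideal_sat_def edge_ideal_eq_monomial_ideal by (rule monomial_ideal_on_antimono) simp

lemma Var_power_mem_sat:
  assumes O: "is_orientation C3_graph E" and w: "\<forall>x. w x > 0" and "u \<noteq> v"
  shows "(Var u ^ w u :: ('v, 'k::comm_ring_1) mpoly) \<in> edge_ideal_sat E w v"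
proof -
  have "(u, v) \<in> E \<or> (v, u) \<in> E" using orientation_C3_graph_tournament[OF O \<open>u \<noteq> v\<close>] by blast
  then have "\<exists>s\<in>edge_exponents E w. divides_on (- {v}) s (single u (w u))"
  proof
    assume "(u, v) \<in> E"
    moreover have "divides_on (- {v}) (single u 1 + single v (w v)) (single u (w u))"
      by (subst divides_on_edge_exponent[OF \<open>u \<noteq> v\<close>]) (use w in \<open>auto simp: Suc_le_eq\<close>)
    ultimately show ?thesis by (blast intro: edge_exponents_memI)
  next
    assume "(v, u) \<in> E"
    moreover have "divides_on (- {v}) (single v 1 + single u (w u)) (single u (w u))"
      using \<open>u \<noteq> v\<close> by (subst divides_on_edge_exponent) auto
    ultimately show ?thesis by (blast intro: edge_exponents_memI)
  qed
  then show ?thesis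
    unfolding edge_ideal_sat_def Var_power single_mem_monomial_ideal_on by blast
qed

lemma nilpotent_mod_sat:
  assumes O: "is_orientation C3_graph E" and w: "\<forall>x. w x > 0" and "s \<noteq> v" "t \<noteq> v"
  shows "(Var s * r + Var t * r' :: ('v, 'k::comm_ring_1) mpoly) ^ (w s + w t) \<in> edge_ideal_sat E w v"
proof (rule power_add_mem_ideal)
  show J: "is_ideal (edge_ideal_sat E w v :: ('v, 'k) mpoly set)"
    unfolding edge_ideal_sat_def by (rule monomial_ideal_on_is_ideal)
  show "(Var s * r) ^ w s \<in> edge_ideal_sat E w v"
    using ideal_mult_right[OF J Var_power_mem_sat[OF O w \<open>s \<noteq> v\<close>]] by (simp add: power_mult_distrib)
  show "(Var t * r') ^ w t \<in> edge_ideal_sat E w v"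
    using ideal_mult_right[OF J Var_power_mem_sat[OF O w \<open>t \<noteq> v\<close>]] by (simp add: power_mult_distrib)
qed

lemma regular_mod_sat:
  fixes h :: "'k::idom poly"
  assumes "h \<noteq> 0" and "n ^ N \<in> edge_ideal_sat E w v"
  shows "regular_mod (edge_ideal_sat E w v) (poly_in v h + n)"
  using monomial_ideal_on_is_ideal regular_mod_poly_in[OF assms(1)] assms(2) unfolding edge_ideal_sat_def
  by (rule regular_mod_add_nilpotent) simp

lemma oriented_triangle_edge_of_local_edges:
  fixes E :: "('v::finite \<times> 'v) set" and T H :: "'v \<Rightarrow> bool"
  assumes card: "CARD('v) = 3" and O: "is_orientation C3_graph E"
    and HT: "\<And>v. H v \<Longrightarrow> T v" and x0: "T x0 \<Longrightarrow> H x0"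
    and local_edge: "\<And>v. \<exists>i j. (i, j) \<in> E \<and> (i \<noteq> v \<longrightarrow> T i) \<and> (j \<noteq> v \<longrightarrow> H j)"
  shows "\<exists>i j. (i, j) \<in> E \<and> T i \<and> H j"
proof (cases "\<forall>v. T v")
  case True
  obtain i j where "(i, j) \<in> E" "j \<noteq> x0 \<longrightarrow> H j" using local_edge[of x0] by blast
  then show ?thesis using True x0 by blast
next
  case False
  then obtain z where z: "\<not> T z" "\<not> H z" using HT by blast
  obtain x y where xyz: "UNIV = {x, y, z}" "x \<noteq> y" "x \<noteq> z" "y \<noteq> z"
  proof -
    have "card (UNIV - {z}) = 2" using card by simp
    then obtain x y where "UNIV - {z} = {x, y}" "x \<noteq> y" unfolding card_2_iff by blast
    then show thesis using that[of x y] by blast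
  qed
  obtain i j where ij: "(i, j) \<in> E" "i \<noteq> x \<longrightarrow> T i" "j \<noteq> x \<longrightarrow> H j" using local_edge[of x] by blast
  obtain i' j' where ij': "(i', j') \<in> E" "i' \<noteq> y \<longrightarrow> T i'" "j' \<noteq> y \<longrightarrow> H j'" using local_edge[of y] by blast
  have "i \<noteq> z" "j \<noteq> z" "i' \<noteq> z" "j' \<noteq> z" using ij ij' z xyz(3,4) HT by auto
  moreover have "i \<noteq> j" "i' \<noteq> j'" using ij(1) ij'(1) orientation_C3_graph_irrefl[OF O] by auto
  moreover have "v = x \<or> v = y \<or> v = z" for v using xyz(1) by blast
  ultimately have "i = x \<and> j = y \<or> i = y \<and> j = x" "i' = x \<and> j' = y \<or> i' = y \<and> j' = x" by metis+
  then have "i' = i" "j' = j" using ij(1) ij'(1) orientation_C3_graph_tournament[OF O xyz(2)] by auto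
  then show ?thesis using ij ij' \<open>i = x \<and> j = y \<or> i = y \<and> j = x\<close> xyz(2) by auto
qed

lemma Inter_edge_ideal_sat_subset:
  fixes E :: "('v::finite \<times> 'v) set"
  assumes card: "CARD('v) = 3" and O: "is_orientation C3_graph E" and w: "\<forall>x. w x > 0"
    and x0: "w x0 = 1"
  shows "(\<Inter>v. edge_ideal_sat E w v) \<subseteq> (edge_ideal E w :: ('v, 'k::comm_ring_1) mpoly set)"
proof
  fix g :: "('v, 'k) mpoly" assume g: "g \<in> (\<Inter>v. edge_ideal_sat E w v)"
  have "\<exists>s\<in>edge_exponents E w. divides_on UNIV s m" if m: "m \<in> keys g" for m
  proof -
    have "\<exists>i j. (i, j) \<in> E \<and> 1 \<le> lookup m i \<and> w j \<le> lookup m j"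
    proof (rule oriented_triangle_edge_of_local_edges[OF card O])
      show "1 \<le> lookup m v" if "w v \<le> lookup m v" for v using that w[rule_format, of v] by linarith
      show "1 \<le> lookup m x0 \<Longrightarrow> w x0 \<le> lookup m x0" using x0 by simp
      fix v
      obtain s where "s \<in> edge_exponents E w" "divides_on (- {v}) s m"
        using g m unfolding edge_ideal_sat_def monomial_ideal_on_def by blast
      then obtain i j where ij: "(i, j) \<in> E" "divides_on (- {v}) (single i 1 + single j (w j)) m"
        unfolding edge_exponents_def by blast
      then have "(i \<noteq> v \<longrightarrow> 1 \<le> lookup m i) \<and> (j \<noteq> v \<longrightarrow> w j \<le> lookup m j)"
        using divides_on_edge_exponent[OF orientation_C3_graph_irrefl[OF O ij(1)]] by simp
      then show "\<exists>i j. (i, j) \<in> E \<and> (i \<noteq> v \<longrightarrow> 1 \<le> lookup m i) \<and> (j \<noteq> v \<longrightarrow> w j \<le> lookup m j)"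
        using ij(1) by blast
    qed
    then obtain i j where ij: "(i, j) \<in> E" "1 \<le> lookup m i" "w j \<le> lookup m j" by blast
    then have "divides_on UNIV (single i 1 + single j (w j)) m"
      using divides_on_edge_exponent[OF orientation_C3_graph_irrefl[OF O ij(1)]] by simp
    then show ?thesis using edge_exponents_memI[OF ij(1)] by blast
  qed
  then show "g \<in> edge_ideal E w"
    unfolding edge_ideal_eq_monomial_ideal monomial_ideal_on_def by blast
qed

lemma edge_ideal_regular_mod_if_sat:
  fixes E :: "('v::finite \<times> 'v) set"
  assumes card: "CARD('v) = 3" and O: "is_orientation C3_graph E" and w: "\<forall>x. w x > 0"
    and x0: "w x0 = 1" and sat: "\<And>v. regular_mod (edge_ideal_sat E w v) f"
  shows "regular_mod (edge_ideal E w :: ('v, 'k::comm_ring_1) mpoly set) f"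
  unfolding regular_mod_def
proof (intro allI impI)
  fix g assume "g * f \<in> edge_ideal E w"
  then have "g * f \<in> edge_ideal_sat E w v" for v by (rule subsetD[OF edge_ideal_subset_sat])
  then have "g \<in> edge_ideal_sat E w v" for v using sat regular_modD by blast
  then show "g \<in> edge_ideal E w" using Inter_edge_ideal_sat_subset[OF card O w x0] by blast
qed

text \<open>Modulo the saturation by \<open>x\<^sub>v\<close>, the element \<open>x\<^sub>a + x\<^sub>b + p(x\<^sub>c)\<close> is a nonzero polynomial in \<open>x\<^sub>v\<close>
  plus a nilpotent.\<close>

lemma regular_mod_sat_Var_add_Var_add_poly_in:
  fixes E :: "('v \<times> 'v) set" and p :: "'k::idom poly"
  assumes O: "is_orientation C3_graph E" and w: "\<forall>x. w x > 0"
    and ab: "- {c} = {a, b}" "a \<noteq> b" and "p \<noteq> 0"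
  shows "regular_mod (edge_ideal_sat E w v) (Var a + Var b + poly_in c p :: ('v, 'k) mpoly)"
proof -
  have "a \<noteq> c" "b \<noteq> c" using ab by auto
  obtain p0 q where pq: "p = pCons p0 q" by (cases p)
  have other: "regular_mod (edge_ideal_sat E w u) (Var u + Var v + poly_in c p)"
    if "u \<noteq> c" "v \<noteq> c" "u \<noteq> v" for u v
  proof -
    have "Var u + Var v + poly_in c p = poly_in u [:p0, 1:] + (Var v * 1 + Var c * poly_in c q)"
      by (simp add: pq poly_in_pCons poly_in_const algebra_simps)
    also have "regular_mod (edge_ideal_sat E w u) \<dots>"
      by (rule regular_mod_sat) (simp, rule nilpotent_mod_sat[OF O w], use that in auto)
    finally show ?thesis .
  qed
  consider "v = c" | "v = a" | "v = b" using ab by blast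
  then show ?thesis
  proof cases
    case 1
    have "Var a + Var b + poly_in c p = poly_in c p + (Var a * 1 + Var b * 1)" by simp
    also have "regular_mod (edge_ideal_sat E w c) \<dots>"
      using \<open>p \<noteq> 0\<close> nilpotent_mod_sat[OF O w \<open>a \<noteq> c\<close> \<open>b \<noteq> c\<close>] by (rule regular_mod_sat)
    finally show ?thesis using 1 by simp
  next
    case 2
    then show ?thesis using other[of a b] \<open>a \<noteq> c\<close> \<open>b \<noteq> c\<close> ab(2) by simp
  next
    case 3
    then show ?thesis using other[of b a] \<open>a \<noteq> c\<close> \<open>b \<noteq> c\<close> ab(2) by (simp add: add.commute)
  qed
qed

lemma exists_regular_in_maximal_ideal:
  fixes E :: "('v::finite \<times> 'v) set" and M :: "('v, 'k::field) mpoly set"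
  assumes card: "CARD('v) = 3" and O: "is_orientation C3_graph E" and w: "\<forall>x. w x > 0"
    and x0: "w x0 = 1" and M: "maximal_ideal M" "edge_ideal E w \<subseteq> M"
  obtains f where "f \<in> M" "regular_mod (edge_ideal E w) f"
proof -
  have iM: "is_ideal M" using M(1) unfolding maximal_ideal_def by blast
  obtain c where cM: "ideal_gen (Var ` (- {c})) \<subseteq> M"
    using prime_over_edge_ideal_contains_Var_compl[OF O maximal_ideal_imp_prime[OF M(1)] M(2)] .
  have "card (- {c}) = 2" using card by (simp add: Compl_eq_Diff_UNIV)
  then obtain a b where ab: "- {c} = {a, b}" "a \<noteq> b" unfolding card_2_iff by blast
  then have "a \<noteq> c" "b \<noteq> c" by auto
  have Var_mem: "Var v \<in> M" if "v \<noteq> c" for v using that cM ideal_gen_superset[of "Var ` (- {c})"] by blast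
  have "ideal_gen (Var ` (- {c})) \<noteq> M" using M(1) not_maximal_ideal_Var_compl by metis
  with cM obtain p where p: "poly_in c p \<in> M" "poly_in c p \<notin> ideal_gen (Var ` (- {c}))"
    using exists_poly_in_between[OF ideal_gen_is_ideal iM subset_refl] by blast
  then have "p \<noteq> 0" using ideal_zero[OF ideal_gen_is_ideal[of "Var ` (- {c})"]] by auto
  have "Var a + Var b + poly_in c p \<in> M"
    using Var_mem[OF \<open>a \<noteq> c\<close>] Var_mem[OF \<open>b \<noteq> c\<close>] p(1) by (simp add: ideal_add[OF iM])
  moreover have "regular_mod (edge_ideal E w) (Var a + Var b + poly_in c p)"
    using regular_mod_sat_Var_add_Var_add_poly_in[OF O w ab \<open>p \<noteq> 0\<close>]
    by (rule edge_ideal_regular_mod_if_sat[OF card O w x0])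
  ultimately show thesis by (rule that)
qed

lemma cohen_macaulay_edge_ideal_if_weight_one:
  fixes E :: "('v::finite \<times> 'v) set"
  assumes card: "CARD('v) = 3" and O: "is_orientation C3_graph E" and w: "\<forall>x. w x > 0"
    and x0: "w x0 = 1"
  shows "cohen_macaulay_quot (edge_ideal E w :: ('v, 'k::field) mpoly set)"
  unfolding cohen_macaulay_quot_def
proof (intro allI impI, elim conjE)
  fix M :: "('v, 'k) mpoly set"
  assume M: "maximal_ideal M" "edge_ideal E w \<subseteq> M"
  have height: "quot_height (edge_ideal E w) M = 1" by (rule quot_height_edge_ideal[OF O w M])
  obtain f where f: "f \<in> M" "regular_mod (edge_ideal E w) f"
    using exists_regular_in_maximal_ideal[OF card O w x0 M] .
  show "quot_grade (edge_ideal E w) M = quot_height (edge_ideal E w) M"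
    using quot_grade_eq_1I[OF edge_ideal_is_ideal maximal_ideal_imp_prime[OF M(1)] M(2) height f]
      height by simp
qed

text \<open>\<open>x\<^sup>u = \<Prod>\<^sub>v x\<^sub>v\<^bsup>w(v) - 1\<^esup>\<close> lies outside \<open>I(D)\<close> when all weights exceed one, while
  \<open>x\<^sup>u x\<^sub>v \<in> I(D)\<close> for every \<open>v\<close> because \<open>v\<close>, not being a source, is the head of some edge.\<close>

lemma exists_socle_monomial_if_no_weight_one:
  fixes E :: "('v::finite \<times> 'v) set"
  assumes O: "is_orientation C3_graph E" and w: "\<forall>x. w x > 0"
    and src: "\<forall>x. is_source C3_graph E x \<longrightarrow> w x = 1" and no_one: "\<forall>x. w x \<noteq> 1"
  obtains u where "single u 1 \<notin> (edge_ideal E w :: ('v, 'k::comm_ring_1) mpoly set)"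
    and "\<And>v. single u 1 * Var v \<in> (edge_ideal E w :: ('v, 'k) mpoly set)"
proof
  let ?I = "edge_ideal E w :: ('v, 'k) mpoly set"
  define u :: "'v \<Rightarrow>\<^sub>0 nat" where "u = (\<Sum>v\<in>UNIV. single v (w v - 1))"
  have lookup_u: "lookup u v = w v - 1" for v
    unfolding u_def by (simp add: lookup_sum lookup_single when_def)
  show "single u 1 \<notin> ?I"
  proof
    assume "single u 1 \<in> ?I"
    then obtain i j where "(i, j) \<in> E" "divides_on UNIV (single i 1 + single j (w j)) u"
      unfolding edge_ideal_eq_monomial_ideal single_mem_monomial_ideal_on edge_exponents_def by auto
    then have "w j \<le> lookup u j"
      using divides_on_edge_exponent[OF orientation_C3_graph_irrefl[OF O]] by blast
    then show False using lookup_u[of j] w by (metis diff_less le_less_trans less_irrefl zero_less_one)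
  qed
  fix v
  obtain y where "(y, v) \<in> E"
    using src no_one orientation_C3_graph_tournament[OF O] unfolding is_source_def C3_graph_def by blast
  moreover have "2 \<le> w y"
    using w no_one by (metis One_nat_def Suc_leI le_antisym not_less_eq_eq numeral_2_eq_2)
  then have "divides_on UNIV (single y 1 + single v (w v)) (u + single v 1)"
    using calculation lookup_u orientation_C3_graph_irrefl[OF O]
    by (subst divides_on_edge_exponent) (auto simp: lookup_add lookup_single)
  ultimately have "single (u + single v 1) 1 \<in> ?I"
    unfolding edge_ideal_eq_monomial_ideal single_mem_monomial_ideal_on
    by (blast intro: edge_exponents_memI)
  then show "single u 1 * Var v \<in> ?I" by (simp add: Var_def mult_single)
qed

lemma not_cohen_macaulay_edge_ideal_if_no_weight_one:
  fixes E :: "('v::finite \<times> 'v) set"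
  assumes O: "is_orientation C3_graph E" and w: "\<forall>x. w x > 0"
    and src: "\<forall>x. is_source C3_graph E x \<longrightarrow> w x = 1" and no_one: "\<forall>x. w x \<noteq> 1"
  shows "\<not> cohen_macaulay_quot (edge_ideal E w :: ('v, 'k::field) mpoly set)"
proof
  let ?I = "edge_ideal E w :: ('v, 'k) mpoly set"
  let ?Z = "ideal_gen (range Var) :: ('v, 'k) mpoly set"
  assume CM: "cohen_macaulay_quot ?I"
  obtain u where u: "single u 1 \<notin> ?I" "\<And>v. single u 1 * Var v \<in> ?I"
    using exists_socle_monomial_if_no_weight_one[OF O w src no_one] by blast
  have "\<not> regular_mod ?I f" if "f \<in> ?Z" for f
    using ideal_gen_mult_mem[OF edge_ideal_is_ideal _ that] u unfolding regular_mod_def by blast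
  then have grade: "quot_grade ?I ?Z = 0" by (rule quot_grade_eq_0I[OF edge_ideal_is_ideal])
  have "Var i * Var j ^ w j \<in> ?Z" for i j
    using ideal_mult_right[OF ideal_gen_is_ideal ideal_gen_superset[THEN subsetD], of "Var i" "range Var"]
    by blast
  then have IZ: "?I \<subseteq> ?Z" unfolding edge_ideal_def by (intro ideal_gen_least[OF ideal_gen_is_ideal]) blast
  have "quot_grade ?I ?Z = quot_height ?I ?Z"
    using CM maximal_ideal_Var IZ unfolding cohen_macaulay_quot_def by blast
  then show False using grade quot_height_edge_ideal[OF O w maximal_ideal_Var IZ] by simp
qed

theorem theorem4p3:
  fixes E :: "('v::finite \<times> 'v) set" and w :: "'v \<Rightarrow> nat"
  assumes "CARD('v) = 3"
    and "is_orientation C3_graph E"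
    and "\<forall>x. w x > 0"
    and "\<forall>x. is_source C3_graph E x \<longrightarrow> w x = 1"
  shows "cohen_macaulay_quot (edge_ideal E w :: ('v, 'k::field) mpoly set)
           \<longleftrightarrow> (\<exists>x. w x = 1)"
  using cohen_macaulay_edge_ideal_if_weight_one[OF assms(1-3)]
    not_cohen_macaulay_edge_ideal_if_no_weight_one[OF assms(2-4)] by blast

end
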